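(* Let $n_1,n_2\ge2$, $k\ge4$, and let $T$ be the double broom $P(n_1-1,k,n_2-1)$. Then $$\dim S/I(T^2)=\left\lceil\frac{k-4}3\right\rceil+2,$$ where $S$ is the polynomial ring over a field $\Bbbk$ in one variable per vertex of $T$.
   Context: The double broom $P(n_1-1,k,n_2-1)$ is the tree obtained from a path $p_1,p_2,\dots,p_k$ on $k$ vertices by attaching $n_1-1$ new vertices of degree 1 to $p_1$ and $n_2-1$ new vertices of degree 1 to $p_k$. $T^2$ is the graph on $V(T)$ with edges the pairs at distance 1 or 2 in $T$. $I(G)=\langle x_ux_v:\{u,v\}\in E(G)\rangle$, and $\dim$ is Krull dimension. *)

theory Defs
  imports "HOL-Algebra.QuotRing" "HOL-Library.Poly_Mapping" "HOL-Library.Extended_Nat"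
begin

definition krull_dim :: "('a, 'b) ring_scheme \<Rightarrow> enat" where
  "krull_dim R = Sup {enat n | n. \<exists>P :: nat \<Rightarrow> 'a set.
      (\<forall>i\<le>n. primeideal (P i) R) \<and> (\<forall>i<n. P i \<subset> P (Suc i))}"

text \<open>Polynomials in variables indexed by 'v with coefficients in 'k, as finitely
  supported maps from monomials (finitely supported exponent vectors) to coefficients.\<close>
definition poly_ring :: "(('v \<Rightarrow>\<^sub>0 nat) \<Rightarrow>\<^sub>0 'k::field) ring" where
  "poly_ring = \<lparr>carrier = UNIV, monoid.mult = (*), one = 1, zero = 0, add = (+)\<rparr>"

definition pvar :: "'v \<Rightarrow> ('v \<Rightarrow>\<^sub>0 nat) \<Rightarrow>\<^sub>0 'k::field" where
  "pvar v = Poly_Mapping.single (Poly_Mapping.single v 1) 1"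

definition edge_ideal :: "('v \<Rightarrow> 'v \<Rightarrow> bool) \<Rightarrow> (('v \<Rightarrow>\<^sub>0 nat) \<Rightarrow>\<^sub>0 'k::field) set" where
  "edge_ideal E = Idl\<^bsub>poly_ring\<^esub> {pvar u * pvar v | u v. E u v}"

definition graph_square :: "('v \<Rightarrow> 'v \<Rightarrow> bool) \<Rightarrow> 'v \<Rightarrow> 'v \<Rightarrow> bool" where
  "graph_square E u v \<longleftrightarrow> u \<noteq> v \<and> (E u v \<or> (\<exists>w. E u w \<and> E w v))"

datatype bvert = Pth nat | Lf1 nat | Lf2 nat

text \<open>Double broom P(n1-1,k,n2-1): path Pth 0,...,Pth (k-1) (= p_1..p_k),
  n1-1 leaves Lf1 j attached to Pth 0, n2-1 leaves Lf2 j attached to Pth (k-1).\<close>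
definition double_broom_V :: "nat \<Rightarrow> nat \<Rightarrow> nat \<Rightarrow> bvert set" where
  "double_broom_V n1 k n2 =
     {Pth i | i. i < k} \<union> {Lf1 j | j. j < n1 - 1} \<union> {Lf2 j | j. j < n2 - 1}"

definition double_broom_E0 :: "nat \<Rightarrow> nat \<Rightarrow> nat \<Rightarrow> bvert \<Rightarrow> bvert \<Rightarrow> bool" where
  "double_broom_E0 n1 k n2 a b \<longleftrightarrow>
     (\<exists>i. Suc i < k \<and> a = Pth i \<and> b = Pth (Suc i)) \<or>
     (\<exists>j. j < n1 - 1 \<and> a = Pth 0 \<and> b = Lf1 j) \<or>
     (\<exists>j. j < n2 - 1 \<and> a = Pth (k - 1) \<and> b = Lf2 j)"

definition double_broom_E :: "nat \<Rightarrow> nat \<Rightarrow> nat \<Rightarrow> bvert \<Rightarrow> bvert \<Rightarrow> bool" where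
  "double_broom_E n1 k n2 a b \<longleftrightarrow> double_broom_E0 n1 k n2 a b \<or> double_broom_E0 n1 k n2 b a"

end

theory Submission
  imports Defs
begin

text \<open>For a finite graph \<open>G\<close>, the Krull dimension of \<open>S/I(G)\<close> is the independence number of \<open>G\<close>.
  An independent set \<open>A\<close> gives the chain of monomial primes \<open>(x\<^sub>v : v \<notin> A) \<subset> \<dots>\<close> above \<open>I(G)\<close>,
  adding the variables of \<open>A\<close> one at a time. Conversely, the variables outside the bottom prime \<open>Q\<^sub>0\<close>
  of a chain above \<open>I(G)\<close> form an independent set \<open>W\<close>, and the elements \<open>y\<^sub>i \<in> Q\<^sub>i\<^sub>+\<^sub>1 - Q\<^sub>i\<close>
  (which may be taken in these variables) are algebraically independent modulo \<open>Q\<^sub>0\<close>; as any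
  \<open>|W| + 1\<close> polynomials in \<open>|W|\<close> variables are algebraically dependent, the chain has length at
  most \<open>|W|\<close>.

  In the square of the double broom, number the vertices by their position along the broom
  (one side's leaves, the path, the other side's leaves). Vertices at positions differing by at
  most \<open>2\<close> are adjacent, so an independent set meets each block of three consecutive positions
  at most once, which bounds it by \<open>(k - 2) div 3 + 2\<close>; one leaf on each side together with every
  third path vertex attains this bound.\<close>

section \<open>Polynomial ideals\<close>

type_synonym ('v,'k) mpoly = "('v \<Rightarrow>\<^sub>0 nat) \<Rightarrow>\<^sub>0 'k"

lemma poly_ring_cring: "cring (poly_ring :: ('v,'k::field) mpoly ring)"
  unfolding poly_ring_def
  apply (rule cringI)
    apply (rule abelian_groupI)
          apply (auto simp: algebra_simps)
    apply (rule_tac x="-x" in exI, simp)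
   apply (rule comm_monoidI)
  apply (auto simp: algebra_simps)
  done

lemma poly_ring_simps [simp]:
  "carrier (poly_ring :: ('v,'k::field) mpoly ring) = UNIV"
  "mult (poly_ring :: ('v,'k::field) mpoly ring) = (*)"
  "add (poly_ring :: ('v,'k::field) mpoly ring) = (+)"
  "one (poly_ring :: ('v,'k::field) mpoly ring) = 1"
  "zero (poly_ring :: ('v,'k::field) mpoly ring) = 0"
  by (simp_all add: poly_ring_def)

lemma poly_ring_a_inv: "a_inv (poly_ring :: ('v,'k::field) mpoly ring) a = - a"
proof -
  interpret cring "poly_ring :: ('v,'k::field) mpoly ring" by (rule poly_ring_cring)
  show ?thesis using minus_equality[of "-a" a] by simp
qed

definition poly_ideal :: "('v,'k::field) mpoly set \<Rightarrow> bool" where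
  "poly_ideal P \<longleftrightarrow> 0 \<in> P \<and> (\<forall>a\<in>P. \<forall>b\<in>P. a + b \<in> P) \<and> (\<forall>a\<in>P. \<forall>c. c * a \<in> P)"

definition poly_prime :: "('v,'k::field) mpoly set \<Rightarrow> bool" where
  "poly_prime P \<longleftrightarrow> poly_ideal P \<and> 1 \<notin> P \<and> (\<forall>a b. a * b \<in> P \<longrightarrow> a \<in> P \<or> b \<in> P)"

lemma poly_ideal_uminus: "poly_ideal P \<Longrightarrow> a \<in> P \<Longrightarrow> - a \<in> P"
  unfolding poly_ideal_def by (metis mult_minus1)

lemma poly_ideal_diff: "poly_ideal P \<Longrightarrow> a \<in> P \<Longrightarrow> b \<in> P \<Longrightarrow> a - b \<in> P"
  using poly_ideal_uminus[of P b] unfolding poly_ideal_def by (metis diff_conv_add_uminus)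

lemma poly_ideal_mult_right: "poly_ideal P \<Longrightarrow> a \<in> P \<Longrightarrow> a * c \<in> P"
  unfolding poly_ideal_def by (metis mult.commute)

lemma poly_ideal_sum: "poly_ideal P \<Longrightarrow> (\<And>x. x \<in> A \<Longrightarrow> f x \<in> P) \<Longrightarrow> sum f A \<in> P"
  by (induction A rule: infinite_finite_induct) (auto simp: poly_ideal_def)

lemma poly_ideal_power: "poly_ideal P \<Longrightarrow> x \<in> P \<Longrightarrow> n > 0 \<Longrightarrow> x ^ n \<in> P"
  by (cases n) (auto simp: poly_ideal_mult_right mult.commute)

lemma poly_prime_power: "poly_prime P \<Longrightarrow> x \<notin> P \<Longrightarrow> x ^ n \<notin> P"
  by (induction n) (auto simp: poly_prime_def)

lemma primeideal_imp_poly_prime: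
  assumes "primeideal P (poly_ring :: ('v,'k::field) mpoly ring)"
  shows "poly_prime P"
proof -
  interpret primeideal P "poly_ring :: ('v,'k::field) mpoly ring" by fact
  have sub: "additive_subgroup P poly_ring" using is_ideal ideal.axioms(1) by blast
  have "1 \<notin> P" using one_imp_carrier I_notcarr by (metis poly_ring_simps(4))
  moreover have "poly_ideal P" unfolding poly_ideal_def
    using additive_subgroup.zero_closed[OF sub] additive_subgroup.a_closed[OF sub] I_l_closed
    by (metis UNIV_I poly_ring_simps)
  moreover have "\<forall>a b. a * b \<in> P \<longrightarrow> a \<in> P \<or> b \<in> P"
    using I_prime by (metis UNIV_I poly_ring_simps)
  ultimately show ?thesis unfolding poly_prime_def by blast
qed

lemma poly_prime_imp_primeideal:
  assumes "poly_prime (P :: ('v,'k::field) mpoly set)"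
  shows "primeideal P poly_ring"
proof (rule primeidealI)
  interpret cring "poly_ring :: ('v,'k::field) mpoly ring" by (rule poly_ring_cring)
  have P: "poly_ideal P" using assms poly_prime_def by blast
  show "cring (poly_ring :: ('v,'k::field) mpoly ring)" by (rule poly_ring_cring)
  show "ideal P poly_ring"
  proof (rule idealI)
    show "ring (poly_ring :: ('v,'k::field) mpoly ring)" by (rule ring_axioms)
    show "subgroup P (add_monoid poly_ring)"
    proof
      show "\<And>x. x \<in> P \<Longrightarrow> inv\<^bsub>add_monoid poly_ring\<^esub> x \<in> P"
        using poly_ideal_uminus[OF P] poly_ring_a_inv unfolding a_inv_def by metis
    qed (use P in \<open>auto simp: poly_ideal_def\<close>)
  qed (use P poly_ideal_mult_right[OF P] in \<open>auto simp: poly_ideal_def\<close>)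
  show "carrier poly_ring \<noteq> P" using assms unfolding poly_prime_def by auto
  show "\<And>a b. a \<in> carrier poly_ring \<Longrightarrow> b \<in> carrier poly_ring \<Longrightarrow> a \<otimes>\<^bsub>poly_ring\<^esub> b \<in> P \<Longrightarrow> a \<in> P \<or> b \<in> P"
    using assms unfolding poly_prime_def by simp
qed

lemma poly_mapping_sum_single:
  "p = (\<Sum>m\<in>Poly_Mapping.keys p. Poly_Mapping.single m (Poly_Mapping.lookup p m))"
proof (rule poly_mapping_eqI)
  fix k
  have "Poly_Mapping.lookup (\<Sum>m\<in>Poly_Mapping.keys p. Poly_Mapping.single m (Poly_Mapping.lookup p m)) k
        = (\<Sum>m\<in>Poly_Mapping.keys p. (Poly_Mapping.lookup p m when m = k))"
    by (simp add: lookup_sum lookup_single)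
  also have "\<dots> = Poly_Mapping.lookup p k"
    by (cases "k \<in> Poly_Mapping.keys p") (auto simp: when_def in_keys_iff)
  finally show "Poly_Mapping.lookup p k =
      Poly_Mapping.lookup (\<Sum>m\<in>Poly_Mapping.keys p. Poly_Mapping.single m (Poly_Mapping.lookup p m)) k"
    by simp
qed

lemma keys_add_nat: "Poly_Mapping.keys (a + b :: 'v \<Rightarrow>\<^sub>0 nat) = Poly_Mapping.keys a \<union> Poly_Mapping.keys b"
  by (auto simp: in_keys_iff lookup_add)

definition mpoly_const :: "'k \<Rightarrow> ('v,'k::field) mpoly" where
  "mpoly_const a = Poly_Mapping.single 0 a"

lemma mpoly_const_mult: "mpoly_const a * mpoly_const b = mpoly_const (a * b)"
  unfolding mpoly_const_def by (simp add: mult_single)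

lemma mpoly_const_one [simp]: "mpoly_const 1 = 1"
  unfolding mpoly_const_def by simp

lemma lookup_mpoly_const_mult:
  "Poly_Mapping.lookup (mpoly_const a * p) m = a * Poly_Mapping.lookup p m"
  unfolding mpoly_const_def mult_map_scale_conv_mult[symmetric] by (simp add: map.rep_eq when_def)

section \<open>Monomial prime ideals\<close>

definition zero_vars :: "'v set \<Rightarrow> ('v,'k::field) mpoly \<Rightarrow> ('v,'k) mpoly" where
  "zero_vars B p = Abs_poly_mapping
     (\<lambda>m. if Poly_Mapping.keys m \<inter> B = {} then Poly_Mapping.lookup p m else 0)"

lemma lookup_zero_vars:
  "Poly_Mapping.lookup (zero_vars B p) m =
     (if Poly_Mapping.keys m \<inter> B = {} then Poly_Mapping.lookup p m else 0)"
proof -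
  have "finite {m. (if Poly_Mapping.keys m \<inter> B = {} then Poly_Mapping.lookup p m else 0) \<noteq> 0}"
    by (rule finite_subset[of _ "Poly_Mapping.keys p"]) (auto simp: in_keys_iff)
  thus ?thesis unfolding zero_vars_def by simp
qed

lemma zero_vars_0 [simp]: "zero_vars B 0 = 0"
  by (rule poly_mapping_eqI) (simp add: lookup_zero_vars)

lemma zero_vars_add: "zero_vars B (p + q) = zero_vars B p + zero_vars B q"
  by (rule poly_mapping_eqI) (simp add: lookup_zero_vars lookup_add)

lemma zero_vars_diff: "zero_vars B (p - q) = zero_vars B p - zero_vars B q"
  by (rule poly_mapping_eqI) (simp add: lookup_zero_vars lookup_minus)

lemma zero_vars_idem: "zero_vars B (zero_vars B p) = zero_vars B p"
  by (rule poly_mapping_eqI) (simp add: lookup_zero_vars)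

lemma zero_vars_sum: "zero_vars B (sum f A) = (\<Sum>x\<in>A. zero_vars B (f x))"
  by (induction A rule: infinite_finite_induct) (auto simp: zero_vars_add)

lemma zero_vars_single:
  "zero_vars B (Poly_Mapping.single m a) =
     (if Poly_Mapping.keys m \<inter> B = {} then Poly_Mapping.single m a else 0)"
  by (rule poly_mapping_eqI) (auto simp: lookup_zero_vars lookup_single when_def)

lemma zero_vars_1 [simp]: "zero_vars B 1 = 1"
  using zero_vars_single[of B 0 1] by simp

lemma zero_vars_mult: "zero_vars B (p * q) = zero_vars B p * zero_vars B q"
proof -
  let ?s = "\<lambda>m. Poly_Mapping.single m (Poly_Mapping.lookup p m)"
  let ?t = "\<lambda>m. Poly_Mapping.single m (Poly_Mapping.lookup q m)"
  have single: "zero_vars B (?s a * ?t b) = zero_vars B (?s a) * zero_vars B (?t b)" for a b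
    by (auto simp: mult_single zero_vars_single keys_add_nat)
  have "zero_vars B (p * q) = zero_vars B ((\<Sum>a\<in>Poly_Mapping.keys p. ?s a) * (\<Sum>b\<in>Poly_Mapping.keys q. ?t b))"
    using poly_mapping_sum_single[of p] poly_mapping_sum_single[of q] by simp
  also have "\<dots> = (\<Sum>a\<in>Poly_Mapping.keys p. zero_vars B (?s a)) * (\<Sum>b\<in>Poly_Mapping.keys q. zero_vars B (?t b))"
    by (simp add: sum_product zero_vars_sum single)
  also have "\<dots> = zero_vars B p * zero_vars B q"
    using poly_mapping_sum_single[of p] poly_mapping_sum_single[of q] by (simp add: zero_vars_sum[symmetric])
  finally show ?thesis .
qed

lemma pvar_nonzero: "pvar v \<noteq> 0"
  unfolding pvar_def by (metis lookup_single_eq one_neq_zero lookup_zero)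

lemma zero_vars_pvar: "zero_vars B (pvar v) = (if v \<in> B then 0 else pvar v)"
  unfolding pvar_def by (simp add: zero_vars_single)

lemma single_eq_mult_pvar:
  assumes "v \<in> Poly_Mapping.keys m"
  shows "Poly_Mapping.single m c =
    Poly_Mapping.single (m - Poly_Mapping.single v 1) c * (pvar v :: ('v,'k::field) mpoly)"
proof -
  have "m - Poly_Mapping.single v 1 + Poly_Mapping.single v 1 = m"
    using assms by (intro poly_mapping_eqI)
      (auto simp: lookup_add minus_poly_mapping.rep_eq lookup_single when_def in_keys_iff)
  thus ?thesis unfolding pvar_def by (simp add: mult_single)
qed

lemma zero_vars_eq_0_imp_mem:
  assumes Q: "poly_ideal Q" and B: "\<And>v. v \<in> B \<Longrightarrow> pvar v \<in> Q" and p: "zero_vars B p = 0"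
  shows "p \<in> Q"
proof -
  have "Poly_Mapping.single m (Poly_Mapping.lookup p m) \<in> Q" if m: "m \<in> Poly_Mapping.keys p" for m
  proof -
    have "Poly_Mapping.keys m \<inter> B \<noteq> {}"
    proof
      assume "Poly_Mapping.keys m \<inter> B = {}"
      hence "Poly_Mapping.lookup (zero_vars B p) m = Poly_Mapping.lookup p m" by (simp add: lookup_zero_vars)
      thus False using p m by (simp add: in_keys_iff)
    qed
    then obtain v where "v \<in> Poly_Mapping.keys m" "v \<in> B" by blast
    thus ?thesis using single_eq_mult_pvar B Q unfolding poly_ideal_def by metis
  qed
  hence "(\<Sum>m\<in>Poly_Mapping.keys p. Poly_Mapping.single m (Poly_Mapping.lookup p m)) \<in> Q"
    by (intro poly_ideal_sum[OF Q]) auto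
  thus ?thesis using poly_mapping_sum_single[of p] by simp
qed

lemma exists_additive_embedding_nat:
  obtains \<phi> :: "('v::finite \<Rightarrow>\<^sub>0 nat) \<Rightarrow> (nat \<Rightarrow>\<^sub>0 nat)"
  where "inj \<phi>" "\<And>a b. \<phi> (a + b) = \<phi> a + \<phi> b"
proof -
  obtain r :: "'v \<Rightarrow> nat" where r: "inj r"
    using finite_imp_inj_to_nat_seg[OF finite_UNIV[where 'a='v]] by blast
  define \<phi> where "\<phi> m = Abs_poly_mapping
      (\<lambda>i. if i \<in> range r then Poly_Mapping.lookup m (inv_into UNIV r i) else 0)" for m :: "'v \<Rightarrow>\<^sub>0 nat"
  have lookup_\<phi>: "Poly_Mapping.lookup (\<phi> m) i =
      (if i \<in> range r then Poly_Mapping.lookup m (inv_into UNIV r i) else 0)" for m i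
  proof -
    have "finite {i. (if i \<in> range r then Poly_Mapping.lookup m (inv_into UNIV r i) else 0) \<noteq> 0}"
      by (rule finite_subset[of _ "range r"]) auto
    thus ?thesis unfolding \<phi>_def by simp
  qed
  have "inj \<phi>"
  proof (rule injI)
    fix a b assume "\<phi> a = \<phi> b"
    hence "Poly_Mapping.lookup (\<phi> a) (r v) = Poly_Mapping.lookup (\<phi> b) (r v)" for v by simp
    thus "a = b" using r by (simp add: lookup_\<phi> poly_mapping_eqI)
  qed
  moreover have "\<phi> (a + b) = \<phi> a + \<phi> b" for a b
    by (rule poly_mapping_eqI) (simp add: lookup_\<phi> lookup_add)
  ultimately show ?thesis using that by blast
qed

lemma keys_minus_single_lookup:
  "Poly_Mapping.keys (p - Poly_Mapping.single a (Poly_Mapping.lookup p a)) \<subseteq> Poly_Mapping.keys p - {a}"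
  by (auto simp: in_keys_iff lookup_minus lookup_single when_def split: if_splits)

lemma lookup_mult_leading:
  fixes p q :: "('m::comm_monoid_add \<Rightarrow>\<^sub>0 'k::field)"
    and \<phi> :: "'m \<Rightarrow> 'n::linordered_cancel_ab_semigroup_add"
  assumes inj: "inj \<phi>" and add: "\<And>a b. \<phi> (a + b) = \<phi> a + \<phi> b"
    and a: "a \<in> Poly_Mapping.keys p" "\<And>a'. a' \<in> Poly_Mapping.keys p \<Longrightarrow> \<phi> a' \<le> \<phi> a"
    and b: "b \<in> Poly_Mapping.keys q" "\<And>b'. b' \<in> Poly_Mapping.keys q \<Longrightarrow> \<phi> b' \<le> \<phi> b"
  shows "Poly_Mapping.lookup (p * q) (a + b) = Poly_Mapping.lookup p a * Poly_Mapping.lookup q b"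
proof -
  define p' where "p' = p - Poly_Mapping.single a (Poly_Mapping.lookup p a)"
  define q' where "q' = q - Poly_Mapping.single b (Poly_Mapping.lookup q b)"
  have p': "Poly_Mapping.keys p' \<subseteq> Poly_Mapping.keys p - {a}"
    and q': "Poly_Mapping.keys q' \<subseteq> Poly_Mapping.keys q - {b}"
    unfolding p'_def q'_def by (rule keys_minus_single_lookup)+
  have no_key: "a + b \<notin> Poly_Mapping.keys (f * g)"
    if "\<And>x y. x \<in> Poly_Mapping.keys f \<Longrightarrow> y \<in> Poly_Mapping.keys g \<Longrightarrow> \<phi> x + \<phi> y < \<phi> a + \<phi> b"
    for f g :: "'m \<Rightarrow>\<^sub>0 'k"
  proof
    assume "a + b \<in> Poly_Mapping.keys (f * g)"
    then obtain x y where "x \<in> Poly_Mapping.keys f" "y \<in> Poly_Mapping.keys g" "a + b = x + y"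
      using keys_mult by blast
    thus False using that add by (metis less_irrefl)
  qed
  have strict: "\<phi> x < \<phi> a" if "x \<in> Poly_Mapping.keys p'" for x
    using that p' a(2) inj by (metis DiffE inj_eq insertCI order_le_less subsetD)
  have strict': "\<phi> y < \<phi> b" if "y \<in> Poly_Mapping.keys q'" for y
    using that q' b(2) inj by (metis DiffE inj_eq insertCI order_le_less subsetD)
  have "p * q = Poly_Mapping.single a (Poly_Mapping.lookup p a) * Poly_Mapping.single b (Poly_Mapping.lookup q b)
      + Poly_Mapping.single a (Poly_Mapping.lookup p a) * q' + p' * q"
    unfolding p'_def q'_def by (simp add: algebra_simps)
  moreover have "a + b \<notin> Poly_Mapping.keys (Poly_Mapping.single a (Poly_Mapping.lookup p a) * q')"
    by (rule no_key) (auto split: if_splits dest: strict')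
  moreover have "a + b \<notin> Poly_Mapping.keys (p' * q)"
    by (rule no_key) (use b(2) in \<open>auto intro: add_less_le_mono dest: strict\<close>)
  ultimately show ?thesis by (simp add: lookup_add mult_single in_keys_iff)
qed

text \<open>Compare leading terms for the monomial order pulled back from the linear order on
  \<open>nat \<Rightarrow>\<^sub>0 nat\<close>.\<close>
lemma mpoly_mult_nonzero:
  fixes p q :: "('v::finite, 'k::field) mpoly"
  assumes "p \<noteq> 0" "q \<noteq> 0"
  shows "p * q \<noteq> 0"
proof -
  obtain \<phi> :: "('v \<Rightarrow>\<^sub>0 nat) \<Rightarrow> (nat \<Rightarrow>\<^sub>0 nat)" where inj: "inj \<phi>" and add: "\<And>a b. \<phi> (a + b) = \<phi> a + \<phi> b"
    using exists_additive_embedding_nat by blast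
  have leading: "\<exists>a\<in>Poly_Mapping.keys f. \<forall>a'\<in>Poly_Mapping.keys f. \<phi> a' \<le> \<phi> a"
    if "f \<noteq> 0" for f :: "('v, 'k) mpoly"
  proof -
    have fin: "finite (\<phi> ` Poly_Mapping.keys f)" and "\<phi> ` Poly_Mapping.keys f \<noteq> {}" using that by auto
    hence "Max (\<phi> ` Poly_Mapping.keys f) \<in> \<phi> ` Poly_Mapping.keys f" by (rule Max_in)
    then obtain a where "a \<in> Poly_Mapping.keys f" "\<phi> a = Max (\<phi> ` Poly_Mapping.keys f)" by auto
    thus ?thesis using fin by (metis Max_ge imageI)
  qed
  obtain a where a: "a \<in> Poly_Mapping.keys p" "\<And>a'. a' \<in> Poly_Mapping.keys p \<Longrightarrow> \<phi> a' \<le> \<phi> a"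
    using leading[OF assms(1)] by blast
  obtain b where b: "b \<in> Poly_Mapping.keys q" "\<And>b'. b' \<in> Poly_Mapping.keys q \<Longrightarrow> \<phi> b' \<le> \<phi> b"
    using leading[OF assms(2)] by blast
  have "Poly_Mapping.lookup (p * q) (a + b) = Poly_Mapping.lookup p a * Poly_Mapping.lookup q b"
    using lookup_mult_leading[OF inj add a b] .
  moreover have "Poly_Mapping.lookup p a \<noteq> 0" "Poly_Mapping.lookup q b \<noteq> 0"
    using a(1) b(1) by (auto simp: in_keys_iff)
  ultimately show ?thesis by auto
qed

text \<open>The prime ideal generated by the variables \<open>x\<^sub>v\<close>, \<open>v \<in> B\<close>.\<close>
definition var_ideal :: "'v set \<Rightarrow> ('v,'k::field) mpoly set" where
  "var_ideal B = {p. zero_vars B p = 0}"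

lemma poly_prime_var_ideal: "poly_prime (var_ideal B :: ('v::finite,'k::field) mpoly set)"
  unfolding poly_prime_def poly_ideal_def var_ideal_def
  by (auto simp: zero_vars_add zero_vars_mult) (metis mpoly_mult_nonzero)

lemma var_ideal_mono: "B \<subseteq> B' \<Longrightarrow> var_ideal B \<subseteq> var_ideal B'"
  unfolding var_ideal_def
proof clarify
  fix p assume "B \<subseteq> B'" and p: "zero_vars B p = 0"
  show "zero_vars B' p = 0"
  proof (rule poly_mapping_eqI)
    fix m
    have "Poly_Mapping.lookup (zero_vars B p) m = 0" using p by simp
    thus "Poly_Mapping.lookup (zero_vars B' p) m = Poly_Mapping.lookup 0 m"
      using \<open>B \<subseteq> B'\<close> by (auto simp: lookup_zero_vars split: if_splits)
  qed
qed

lemma pvar_in_var_ideal_iff: "pvar v \<in> var_ideal B \<longleftrightarrow> v \<in> B"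
  unfolding var_ideal_def by (simp add: zero_vars_pvar pvar_nonzero)

section \<open>Length of prime chains\<close>

lemma sum_power_factor:
  fixes y :: "'a::comm_semiring_1"
  assumes "\<And>j. j \<in> J \<Longrightarrow> a \<le> e j"
  shows "(\<Sum>j\<in>J. f j * (y ^ e j * T j)) = y ^ a * (\<Sum>j\<in>J. f j * (y ^ (e j - a) * T j))"
  unfolding sum_distrib_left
proof (rule sum.cong[OF refl])
  fix j assume "j \<in> J"
  hence "y ^ e j = y ^ a * y ^ (e j - a)" using assms by (simp flip: power_add)
  thus "f j * (y ^ e j * T j) = y ^ a * (f j * (y ^ (e j - a) * T j))" by (simp add: algebra_simps)
qed

lemma sum_power_diff_lowest_mem:
  fixes y :: "('v,'k::field) mpoly"
  assumes Q: "poly_ideal Q" and y: "y \<in> Q" and J: "finite J" and a: "\<And>j. j \<in> J \<Longrightarrow> a \<le> e j"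
  shows "(\<Sum>j\<in>J. f j * (y ^ (e j - a) * T j)) - (\<Sum>j\<in>{j\<in>J. e j = a}. f j * T j) \<in> Q"
proof -
  have "(\<Sum>j\<in>J. f j * (y ^ (e j - a) * T j)) - (\<Sum>j\<in>{j\<in>J. e j = a}. f j * T j)
      = (\<Sum>j\<in>J - {j. e j = a}. f j * (y ^ (e j - a) * T j))"
    using sum.Int_Diff[OF J, of "\<lambda>j. f j * (y ^ (e j - a) * T j)" "{j. e j = a}"]
    by (simp add: Collect_conj_eq inf_commute)
  also have "\<dots> \<in> Q"
  proof (rule poly_ideal_sum[OF Q])
    fix j assume "j \<in> J - {j. e j = a}"
    hence "0 < e j - a" using a[of j] by auto
    hence "y ^ (e j - a) \<in> Q" by (rule poly_ideal_power[OF Q y])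
    thus "f j * (y ^ (e j - a) * T j) \<in> Q"
      using Q poly_ideal_mult_right[OF Q] unfolding poly_ideal_def by blast
  qed
  finally show ?thesis .
qed

text \<open>Write the relation as \<open>y\<^sup>a R\<close>, with \<open>a\<close> the least exponent carrying a nonzero coefficient:
  since \<open>P\<close> is prime and \<open>y \<notin> P\<close>, \<open>R \<in> P \<subseteq> Q\<close>, and modulo \<open>Q \<ni> y\<close> only the terms with \<open>e j = a\<close>
  survive in \<open>R\<close>.\<close>
lemma lowest_power_relation:
  fixes y :: "('v,'k::field) mpoly" and e :: "'j \<Rightarrow> nat" and T :: "'j \<Rightarrow> ('v,'k) mpoly"
  assumes P: "poly_prime P" and Q: "poly_ideal Q" and PQ: "P \<subseteq> Q" and y: "y \<in> Q" "y \<notin> P"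
    and J: "finite J" "j \<in> J" "c j \<noteq> 0"
    and rel: "(\<Sum>j\<in>J. mpoly_const (c j) * (y ^ e j * T j)) \<in> P"
  obtains a j1 where "j1 \<in> J" "c j1 \<noteq> 0" "e j1 = a"
    "(\<Sum>j\<in>{j\<in>J. e j = a}. mpoly_const (c j) * T j) \<in> Q"
proof -
  define J0 where "J0 = {j\<in>J. c j \<noteq> 0}"
  define a where "a = Min (e ` J0)"
  have fin: "finite J0" and "J0 \<noteq> {}" using J unfolding J0_def by auto
  hence "a \<in> e ` J0" unfolding a_def by (intro Min_in) auto
  then obtain j1 where j1: "j1 \<in> J" "c j1 \<noteq> 0" "e j1 = a" unfolding J0_def by auto
  have a_le: "a \<le> e j" if "j \<in> J0" for j unfolding a_def using fin that by simp
  have drop_zeros: "(\<Sum>j\<in>J'. mpoly_const (c j) * g j) = (\<Sum>j\<in>J' \<inter> J0. mpoly_const (c j) * g j)"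
    if "J' \<subseteq> J" for J' g
    using that J by (intro sum.mono_neutral_right) (auto simp: J0_def mpoly_const_def intro: finite_subset)
  define R where "R = (\<Sum>j\<in>J0. mpoly_const (c j) * (y ^ (e j - a) * T j))"
  have "J \<inter> J0 = J0" unfolding J0_def by blast
  hence "(\<Sum>j\<in>J. mpoly_const (c j) * (y ^ e j * T j)) = (\<Sum>j\<in>J0. mpoly_const (c j) * (y ^ e j * T j))"
    using drop_zeros[of J] by simp
  also have "\<dots> = y ^ a * R" unfolding R_def by (rule sum_power_factor[OF a_le])
  finally have "y ^ a * R \<in> P" using rel by simp
  moreover have "y ^ a \<notin> P" using poly_prime_power[OF P y(2)] .
  ultimately have "R \<in> Q" using P PQ unfolding poly_prime_def by blast
  moreover have "R - (\<Sum>j\<in>{j\<in>J0. e j = a}. mpoly_const (c j) * T j) \<in> Q"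
    unfolding R_def by (rule sum_power_diff_lowest_mem[OF Q y(1) fin a_le])
  ultimately have "R - (R - (\<Sum>j\<in>{j\<in>J0. e j = a}. mpoly_const (c j) * T j)) \<in> Q"
    by (rule poly_ideal_diff[OF Q])
  moreover have "{j\<in>J. e j = a} \<inter> J0 = {j\<in>J0. e j = a}" unfolding J0_def by blast
  moreover have "{j\<in>J. e j = a} \<subseteq> J" by blast
  ultimately show ?thesis using that[OF j1] drop_zeros[of "{j\<in>J. e j = a}" T] by simp
qed

lemma inj_on_restrict_Suc:
  assumes "inj_on (\<lambda>\<alpha>. restrict \<alpha> {s..<m}) J"
  shows "inj_on (\<lambda>\<alpha>. restrict \<alpha> {Suc s..<m}) {\<alpha>\<in>J. \<alpha> s = a}"
proof (rule inj_onI)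
  fix \<alpha> \<beta> assume \<alpha>: "\<alpha> \<in> {\<alpha>\<in>J. \<alpha> s = a}" and \<beta>: "\<beta> \<in> {\<alpha>\<in>J. \<alpha> s = a}"
    and eq: "restrict \<alpha> {Suc s..<m} = restrict \<beta> {Suc s..<m}"
  have "restrict \<alpha> {s..<m} = restrict \<beta> {s..<m}"
  proof
    fix x show "restrict \<alpha> {s..<m} x = restrict \<beta> {s..<m} x"
      using fun_cong[OF eq, of x] \<alpha> \<beta> by (cases "x = s") auto
  qed
  thus "\<alpha> = \<beta>" using assms \<alpha> \<beta> by (auto dest: inj_onD)
qed

text \<open>A polynomial relation among \<open>y\<^sub>s, \<dots>, y\<^sub>m\<^sub>-\<^sub>1\<close> is encoded by a finite set \<open>J\<close> of exponent
  vectors, pairwise distinct on \<open>{s..<m}\<close>, with coefficients \<open>c\<close>.\<close>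
lemma prime_chain_no_relation:
  fixes y :: "nat \<Rightarrow> ('v,'k::field) mpoly" and c :: "(nat \<Rightarrow> nat) \<Rightarrow> 'k"
  assumes "s \<le> m"
    and "\<And>i. s \<le> i \<Longrightarrow> i \<le> m \<Longrightarrow> poly_prime (Q i)"
    and "\<And>i. s \<le> i \<Longrightarrow> i < m \<Longrightarrow> Q i \<subseteq> Q (Suc i) \<and> y i \<in> Q (Suc i) \<and> y i \<notin> Q i"
    and "finite J" "inj_on (\<lambda>\<alpha>. restrict \<alpha> {s..<m}) J" "\<alpha> \<in> J" "c \<alpha> \<noteq> 0"
    and "(\<Sum>\<alpha>\<in>J. mpoly_const (c \<alpha>) * (\<Prod>i=s..<m. y i ^ \<alpha> i)) \<in> Q s"
  shows False
  using assms
proof (induction "m - s" arbitrary: s J \<alpha>)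
  case 0
  hence "s = m" by simp
  hence "J = {\<alpha>}" using "0.prems"(5,6) by (auto simp: inj_on_def)
  hence "mpoly_const (c \<alpha>) \<in> Q s" using "0.prems"(8) \<open>s = m\<close> by simp
  hence "mpoly_const (inverse (c \<alpha>)) * mpoly_const (c \<alpha>) \<in> Q s"
    using "0.prems"(2)[of s] \<open>s = m\<close> unfolding poly_prime_def poly_ideal_def by blast
  thus False using "0.prems"(2)[of s] "0.prems"(7) \<open>s = m\<close> by (simp add: mpoly_const_mult poly_prime_def)
next
  case (Suc d)
  note prems = Suc.prems
  have s: "s < m" using Suc.hyps(2) by simp
  define T where "T \<alpha> = (\<Prod>i=Suc s..<m. y i ^ \<alpha> i)" for \<alpha> :: "nat \<Rightarrow> nat"
  have "(\<Prod>i=s..<m. y i ^ \<alpha> i) = y s ^ \<alpha> s * T \<alpha>" for \<alpha>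
    unfolding T_def using s by (simp add: prod.atLeast_Suc_lessThan)
  hence rel0: "(\<Sum>\<alpha>\<in>J. mpoly_const (c \<alpha>) * (y s ^ \<alpha> s * T \<alpha>)) \<in> Q s" using prems(8) by simp
  have P: "poly_prime (Q s)" and Q: "poly_ideal (Q (Suc s))"
    using prems(2)[of s] prems(2)[of "Suc s"] s by (auto simp: poly_prime_def)
  have ch: "Q s \<subseteq> Q (Suc s)" "y s \<in> Q (Suc s)" "y s \<notin> Q s" using prems(3)[of s] s by auto
  obtain a \<alpha>1 where \<alpha>1: "\<alpha>1 \<in> J" "c \<alpha>1 \<noteq> 0" "\<alpha>1 s = a"
    and rel: "(\<Sum>\<alpha>\<in>{\<alpha>\<in>J. \<alpha> s = a}. mpoly_const (c \<alpha>) * T \<alpha>) \<in> Q (Suc s)"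
    by (rule lowest_power_relation[OF P Q ch prems(4,6,7) rel0])
  have inj: "inj_on (\<lambda>\<alpha>. restrict \<alpha> {Suc s..<m}) {\<alpha>\<in>J. \<alpha> s = a}"
    by (rule inj_on_restrict_Suc[OF prems(5)])
  show False
  proof (rule Suc.hyps(1)[of "Suc s" "{\<alpha>\<in>J. \<alpha> s = a}" \<alpha>1])
    show "(\<Sum>\<alpha>\<in>{\<alpha>\<in>J. \<alpha> s = a}. mpoly_const (c \<alpha>) * (\<Prod>i=Suc s..<m. y i ^ \<alpha> i)) \<in> Q (Suc s)"
      using rel unfolding T_def .
    show "d = m - Suc s" using Suc.hyps(2) by simp
    show "Suc s \<le> m" using s by simp
    show "\<And>i. Suc s \<le> i \<Longrightarrow> i \<le> m \<Longrightarrow> poly_prime (Q i)" using prems(2) by simp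
    show "\<And>i. Suc s \<le> i \<Longrightarrow> i < m \<Longrightarrow> Q i \<subseteq> Q (Suc i) \<and> y i \<in> Q (Suc i) \<and> y i \<notin> Q i"
      using prems(3) by simp
    show "finite {\<alpha>\<in>J. \<alpha> s = a}" using prems(4) by simp
    show "\<alpha>1 \<in> {\<alpha>\<in>J. \<alpha> s = a}" using \<alpha>1 by simp
  qed (fact inj \<alpha>1)+
qed

lemma exists_nontrivial_linear_relation:
  fixes g :: "'j \<Rightarrow> 'm \<Rightarrow> 'k::field"
  assumes "finite K" "finite J" "card K < card J" "\<And>j m. j \<in> J \<Longrightarrow> m \<notin> K \<Longrightarrow> g j m = 0"
  shows "\<exists>c. (\<exists>j\<in>J. c j \<noteq> 0) \<and> (\<forall>m. (\<Sum>j\<in>J. c j * g j m) = 0)"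
  using assms
proof (induction K arbitrary: J g rule: finite_induct)
  case empty
  then obtain j0 where j0: "j0 \<in> J" by fastforce
  define c where "c j = (if j = j0 then 1 else (0::'k))" for j
  have "(\<Sum>j\<in>J. c j * g j m) = 0" for m
    using empty.prems j0 by (simp add: c_def)
  thus ?case using j0 by (metis c_def one_neq_zero)
next
  case (insert m0 K)
  show ?case
  proof (cases "\<forall>j\<in>J. g j m0 = 0")
    case True
    show ?thesis
    proof (rule insert.IH)
      show "finite J" by fact
      show "card K < card J" using insert by simp
      show "\<And>j m. j \<in> J \<Longrightarrow> m \<notin> K \<Longrightarrow> g j m = 0" using True insert.prems by (metis insertE)
    qed
  next
    case False
    then obtain j0 where j0: "j0 \<in> J" "g j0 m0 \<noteq> 0" by blast
    define J' where "J' = J - {j0}"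
    define h where "h j m = g j m - (g j m0 / g j0 m0) * g j0 m" for j m
    obtain c' where c': "\<exists>j\<in>J'. c' j \<noteq> 0" "\<And>m. (\<Sum>j\<in>J'. c' j * h j m) = 0"
    proof -
      have "\<exists>c. (\<exists>j\<in>J'. c j \<noteq> 0) \<and> (\<forall>m. (\<Sum>j\<in>J'. c j * h j m) = 0)"
      proof (rule insert.IH)
        show "finite J'" using insert.prems unfolding J'_def by simp
        show "card K < card J'" using insert j0 unfolding J'_def by simp
        show "h j m = 0" if "j \<in> J'" "m \<notin> K" for j m
          using that insert.prems(3) j0 unfolding h_def J'_def by (cases "m = m0") auto
      qed
      thus ?thesis using that by blast
    qed
    define c where "c j = (if j = j0 then - (\<Sum>j'\<in>J'. c' j' * (g j' m0 / g j0 m0)) else c' j)" for j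
    have "(\<Sum>j\<in>J. c j * g j m) = 0" for m
    proof -
      have "(\<Sum>j\<in>J. c j * g j m) = c j0 * g j0 m + (\<Sum>j\<in>J'. c' j * g j m)"
        unfolding J'_def using j0 insert.prems(1) by (simp add: sum.remove c_def)
      also have "\<dots> = (\<Sum>j\<in>J'. c' j * h j m)"
        unfolding c_def h_def by (simp add: sum_distrib_right sum_distrib_left sum_subtractf sum_divide_distrib algebra_simps)
      finally show ?thesis using c' by simp
    qed
    moreover have "\<exists>j\<in>J. c j \<noteq> 0" using c'(1) unfolding c_def J'_def by auto
    ultimately show ?thesis by blast
  qed
qed

definition monomials_bounded :: "'v set \<Rightarrow> nat \<Rightarrow> ('v,'k::field) mpoly \<Rightarrow> bool" where
  "monomials_bounded W B p \<longleftrightarrow>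
     (\<forall>m\<in>Poly_Mapping.keys p. Poly_Mapping.keys m \<subseteq> W \<and> (\<forall>v. Poly_Mapping.lookup m v \<le> B))"

lemma monomials_bounded_mono: "monomials_bounded W B p \<Longrightarrow> B \<le> B' \<Longrightarrow> monomials_bounded W B' p"
  unfolding monomials_bounded_def by (meson order_trans)

lemma monomials_bounded_1: "monomials_bounded W 0 1"
  unfolding monomials_bounded_def by simp

lemma monomials_bounded_mult:
  assumes p: "monomials_bounded W B1 p" and q: "monomials_bounded W B2 q"
  shows "monomials_bounded W (B1 + B2) (p * q)"
  unfolding monomials_bounded_def
proof
  fix m assume "m \<in> Poly_Mapping.keys (p * q)"
  then obtain a b where "a \<in> Poly_Mapping.keys p" "b \<in> Poly_Mapping.keys q" "m = a + b"
    using keys_mult by blast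
  thus "Poly_Mapping.keys m \<subseteq> W \<and> (\<forall>v. Poly_Mapping.lookup m v \<le> B1 + B2)"
    using p q keys_add[of a b] unfolding monomials_bounded_def by (fastforce simp: lookup_add add_mono)
qed

lemma monomials_bounded_power: "monomials_bounded W B p \<Longrightarrow> monomials_bounded W (n * B) (p ^ n)"
  by (induction n) (auto simp: monomials_bounded_1 add.commute intro: monomials_bounded_mult)

lemma monomials_bounded_prod:
  "finite I \<Longrightarrow> (\<And>i. i \<in> I \<Longrightarrow> monomials_bounded W (B i) (f i))
     \<Longrightarrow> monomials_bounded W (\<Sum>i\<in>I. B i) (\<Prod>i\<in>I. f i)"
  by (induction I rule: finite_induct) (auto simp: monomials_bounded_1 monomials_bounded_mult)

lemma exists_monomials_bounded:
  assumes "\<forall>m\<in>Poly_Mapping.keys p. Poly_Mapping.keys m \<subseteq> W"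
  shows "\<exists>B. monomials_bounded W B p"
proof -
  define B where "B = (\<Sum>m\<in>Poly_Mapping.keys p. \<Sum>v\<in>Poly_Mapping.keys m. Poly_Mapping.lookup m v)"
  have "Poly_Mapping.lookup m v \<le> B" if "m \<in> Poly_Mapping.keys p" for m v
  proof (cases "v \<in> Poly_Mapping.keys m")
    case True
    hence "Poly_Mapping.lookup m v \<le> (\<Sum>v\<in>Poly_Mapping.keys m. Poly_Mapping.lookup m v)"
      by (intro member_le_sum) auto
    also have "\<dots> \<le> B" unfolding B_def using that
      by (intro member_le_sum[where f="\<lambda>m. \<Sum>v\<in>Poly_Mapping.keys m. Poly_Mapping.lookup m v"]) auto
    finally show ?thesis .
  qed (simp add: in_keys_iff)
  thus ?thesis using assms unfolding monomials_bounded_def by blast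
qed

lemma card_bounded_monomials:
  fixes W :: "'v set" and B :: nat
  assumes W: "finite W"
  defines "K \<equiv> {m::'v \<Rightarrow>\<^sub>0 nat. Poly_Mapping.keys m \<subseteq> W \<and> (\<forall>v. Poly_Mapping.lookup m v \<le> B)}"
  shows "finite K" and "card K \<le> (B + 1) ^ card W"
proof -
  define F where "F = PiE W (\<lambda>_. {..B})"
  define \<psi> where "\<psi> f = Abs_poly_mapping (\<lambda>v. if v \<in> W then f v else (0::nat))" for f :: "'v \<Rightarrow> nat"
  have lookup_\<psi>: "Poly_Mapping.lookup (\<psi> f) = (\<lambda>v. if v \<in> W then f v else 0)" for f
  proof -
    have "finite {v. (if v \<in> W then f v else 0) \<noteq> 0}" by (rule finite_subset[OF _ W]) auto
    thus ?thesis unfolding \<psi>_def by simp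
  qed
  have sub: "K \<subseteq> \<psi> ` F"
  proof
    fix m assume m: "m \<in> K"
    have "restrict (Poly_Mapping.lookup m) W \<in> F" using m unfolding F_def K_def by auto
    moreover have "\<psi> (restrict (Poly_Mapping.lookup m) W) = m"
      using m unfolding K_def by (intro poly_mapping_eqI) (auto simp: lookup_\<psi> in_keys_iff)
    ultimately show "m \<in> \<psi> ` F" by (metis imageI)
  qed
  have fF: "finite F" unfolding F_def using W by (simp add: finite_PiE)
  show "finite K" using sub fF finite_subset by blast
  have "card K \<le> card F" using sub fF by (meson card_image_le card_mono finite_imageI order_trans)
  thus "card K \<le> (B + 1) ^ card W" unfolding F_def using W by (simp add: card_PiE)
qed

lemma card_bounded_exponents:
  fixes N d :: nat
  defines "J \<equiv> {\<alpha>::nat\<Rightarrow>nat. (\<forall>i\<le>N. \<alpha> i \<le> d) \<and> (\<forall>i. N < i \<longrightarrow> \<alpha> i = 0)}"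
  shows "finite J" and "card J = (d + 1) ^ Suc N" and "inj_on (\<lambda>\<alpha>. restrict \<alpha> {0..<Suc N}) J"
proof -
  define F where "F = PiE {..N} (\<lambda>_. {..d})"
  define e where "e f = (\<lambda>i. if i \<le> N then f i else (0::nat))" for f :: "nat \<Rightarrow> nat"
  have "J = e ` F"
  proof
    show "J \<subseteq> e ` F"
    proof
      fix \<alpha> assume \<alpha>: "\<alpha> \<in> J"
      have "restrict \<alpha> {..N} \<in> F" using \<alpha> unfolding F_def J_def by auto
      moreover have "e (restrict \<alpha> {..N}) = \<alpha>" using \<alpha> unfolding e_def J_def by (auto simp: fun_eq_iff)
      ultimately show "\<alpha> \<in> e ` F" by (metis imageI)
    qed
    show "e ` F \<subseteq> J" unfolding e_def F_def J_def by (auto simp: PiE_iff)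
  qed
  moreover have "inj_on e F"
  proof (rule inj_onI)
    fix f g assume fg: "f \<in> F" "g \<in> F" "e f = e g"
    show "f = g"
    proof
      fix i show "f i = g i"
        using fg unfolding F_def e_def
        by (cases "i \<le> N") (auto simp: PiE_iff extensional_def dest: fun_cong[of _ _ i])
    qed
  qed
  moreover have "finite F" "card F = (d + 1) ^ Suc N" unfolding F_def by (simp_all add: finite_PiE card_PiE)
  ultimately show "finite J" "card J = (d + 1) ^ Suc N" by (simp_all add: card_image)
  show "inj_on (\<lambda>\<alpha>. restrict \<alpha> {0..<Suc N}) J"
  proof (rule inj_onI)
    fix \<alpha> \<beta> assume "\<alpha> \<in> J" "\<beta> \<in> J" and eq: "restrict \<alpha> {0..<Suc N} = restrict \<beta> {0..<Suc N}"
    show "\<alpha> = \<beta>"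
    proof
      fix i show "\<alpha> i = \<beta> i"
        using fun_cong[OF eq, of i] \<open>\<alpha> \<in> J\<close> \<open>\<beta> \<in> J\<close> unfolding J_def by (cases "i \<le> N") auto
    qed
  qed
qed

lemma monomials_bounded_prod_power:
  assumes "\<And>i. i < n \<Longrightarrow> monomials_bounded W D (z i)" and "\<And>i. i < n \<Longrightarrow> \<alpha> i \<le> d"
  shows "monomials_bounded W (n * d * D) (\<Prod>i=0..<n. z i ^ \<alpha> i)"
proof -
  have "monomials_bounded W (\<Sum>i=0..<n. \<alpha> i * D) (\<Prod>i=0..<n. z i ^ \<alpha> i)"
    by (rule monomials_bounded_prod) (simp_all add: monomials_bounded_power assms(1))
  moreover have "(\<Sum>i=0..<n. \<alpha> i * D) \<le> (\<Sum>i=0..<n. d * D)"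
    using assms(2) by (intro sum_mono mult_right_mono) auto
  ultimately show ?thesis by (simp add: monomials_bounded_mono mult.assoc)
qed

lemma power_count_lt:
  fixes N D :: nat
  defines "d \<equiv> (Suc N * D + 1) ^ N"
  shows "(Suc N * d * D + 1) ^ N < (d + 1) ^ Suc N"
proof -
  have "(Suc N * d * D + 1) ^ N \<le> ((Suc N * D + 1) * (d + 1)) ^ N"
    by (rule power_mono) (simp_all add: algebra_simps)
  also have "\<dots> = d * (d + 1) ^ N" unfolding d_def by (rule power_mult_distrib)
  also have "\<dots> < (d + 1) ^ Suc N" by simp
  finally show ?thesis .
qed

text \<open>Dimension count: for large \<open>d\<close>, the \<open>(d + 1)\<^sup>N\<^sup>+\<^sup>1\<close> products \<open>\<Prod>\<^sub>i z\<^sub>i\<^sup>\<alpha>\<^sup>\<^sub>i\<close> with all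
  \<open>\<alpha>\<^sub>i \<le> d\<close> outnumber the monomials in \<open>N\<close> variables that they can involve.\<close>
lemma exists_algebraic_relation:
  fixes z :: "nat \<Rightarrow> ('v,'k::field) mpoly"
  assumes W: "finite W"
    and z: "\<And>i m. i \<le> card W \<Longrightarrow> m \<in> Poly_Mapping.keys (z i) \<Longrightarrow> Poly_Mapping.keys m \<subseteq> W"
  obtains J c \<alpha> where "finite J" "inj_on (\<lambda>\<alpha>. restrict \<alpha> {0..<Suc (card W)}) J" "\<alpha> \<in> J" "c \<alpha> \<noteq> 0"
    "(\<Sum>\<alpha>\<in>J. mpoly_const (c \<alpha>) * (\<Prod>i=0..<Suc (card W). z i ^ \<alpha> i)) = 0"
proof -
  define N where "N = card W"
  have "\<forall>i. \<exists>B. i \<le> N \<longrightarrow> monomials_bounded W B (z i)"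
    using exists_monomials_bounded z unfolding N_def by blast
  then obtain Bz where Bz: "\<And>i. i \<le> N \<Longrightarrow> monomials_bounded W (Bz i) (z i)" by metis
  define D where "D = (\<Sum>i\<le>N. Bz i)"
  have zD: "monomials_bounded W D (z i)" if "i < Suc N" for i
  proof -
    have "Bz i \<le> D" using that unfolding D_def by (intro member_le_sum) auto
    thus ?thesis using Bz[of i] that by (simp add: monomials_bounded_mono)
  qed
  define d where "d = (Suc N * D + 1) ^ N"
  define J where "J = {\<alpha>::nat\<Rightarrow>nat. (\<forall>i\<le>N. \<alpha> i \<le> d) \<and> (\<forall>i. N < i \<longrightarrow> \<alpha> i = 0)}"
  define K where "K = {m::'v \<Rightarrow>\<^sub>0 nat. Poly_Mapping.keys m \<subseteq> W \<and> (\<forall>v. Poly_Mapping.lookup m v \<le> Suc N * d * D)}"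
  define P where "P \<alpha> = (\<Prod>i=0..<Suc N. z i ^ \<alpha> i)" for \<alpha>
  note J = card_bounded_exponents[of N d, folded J_def]
  note K = card_bounded_monomials[OF W, of "Suc N * d * D", folded K_def N_def]
  have P_vanish: "Poly_Mapping.lookup (P \<alpha>) m = 0" if "\<alpha> \<in> J" "m \<notin> K" for \<alpha> m
  proof -
    have "monomials_bounded W (Suc N * d * D) (P \<alpha>)"
      unfolding P_def using that(1) by (intro monomials_bounded_prod_power zD) (auto simp: J_def)
    thus ?thesis using that(2) unfolding monomials_bounded_def K_def by (auto simp: in_keys_iff)
  qed
  have "card K < card J" using K(2) J(2) power_count_lt[of N D] unfolding d_def by linarith
  then obtain c where c: "\<exists>\<alpha>\<in>J. c \<alpha> \<noteq> 0" "\<And>m. (\<Sum>\<alpha>\<in>J. c \<alpha> * Poly_Mapping.lookup (P \<alpha>) m) = (0::'k)"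
    using exists_nontrivial_linear_relation[OF K(1) J(1), of "\<lambda>\<alpha> m. Poly_Mapping.lookup (P \<alpha>) m"] P_vanish
    by blast
  have "(\<Sum>\<alpha>\<in>J. mpoly_const (c \<alpha>) * P \<alpha>) = 0"
    by (rule poly_mapping_eqI) (simp add: lookup_sum lookup_mpoly_const_mult c(2))
  thus ?thesis using that J(1,3) c(1) unfolding P_def N_def by blast
qed

text \<open>Setting the variables \<open>x\<^sub>v \<in> Q\<^sub>0\<close> to zero changes a polynomial only by an element of \<open>Q\<^sub>0\<close>, so
  the witnesses of a strict chain may be taken in the remaining variables.\<close>
lemma prime_chain_witnesses_in_nonvars:
  fixes Q :: "nat \<Rightarrow> ('v,'k::field) mpoly set"
  assumes prime: "\<And>i. i \<le> n \<Longrightarrow> poly_prime (Q i)" and chain: "\<And>i. i < n \<Longrightarrow> Q i \<subset> Q (Suc i)"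
  obtains z where "\<And>i. i < n \<Longrightarrow> z i \<in> Q (Suc i) \<and> z i \<notin> Q i"
    and "\<And>i m. m \<in> Poly_Mapping.keys (z i) \<Longrightarrow> Poly_Mapping.keys m \<subseteq> {v. pvar v \<notin> Q 0}"
proof -
  define C where "C = {v. pvar v \<in> Q 0}"
  have mono: "Q 0 \<subseteq> Q i" if "i \<le> n" for i
    using that proof (induction i)
    case (Suc i) thus ?case using chain[of i] by auto
  qed simp
  have ideal: "poly_ideal (Q i)" if "i \<le> n" for i using prime[OF that] poly_prime_def by blast
  have "\<forall>i. \<exists>y. i < n \<longrightarrow> y \<in> Q (Suc i) \<and> y \<notin> Q i" using chain by blast
  then obtain y where y: "\<And>i. i < n \<Longrightarrow> y i \<in> Q (Suc i) \<and> y i \<notin> Q i" by metis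
  define z where "z i = zero_vars C (y i)" for i
  have diff: "y i - z i \<in> Q j" if "j \<le> n" for i j
  proof -
    have "y i - z i \<in> Q 0"
      by (rule zero_vars_eq_0_imp_mem[OF ideal[of 0], of C])
        (auto simp: C_def z_def zero_vars_diff zero_vars_idem)
    thus ?thesis using mono[OF that] by blast
  qed
  have "z i \<in> Q (Suc i) \<and> z i \<notin> Q i" if i: "i < n" for i
  proof
    show "z i \<in> Q (Suc i)"
      using poly_ideal_diff[OF ideal[of "Suc i"] _ diff[of "Suc i" i]] y[OF i] i by fastforce
    show "z i \<notin> Q i"
    proof
      assume "z i \<in> Q i"
      hence "(y i - z i) + z i \<in> Q i"
        using ideal[OF less_imp_le[OF i]] diff[OF less_imp_le[OF i]] unfolding poly_ideal_def by blast
      thus False using y[OF i] by simp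
    qed
  qed
  moreover have "Poly_Mapping.keys m \<subseteq> {v. pvar v \<notin> Q 0}" if "m \<in> Poly_Mapping.keys (z i)" for i m
  proof -
    have "Poly_Mapping.keys m \<inter> C = {}" using that unfolding z_def
      by (auto simp: in_keys_iff lookup_zero_vars split: if_splits)
    thus ?thesis unfolding C_def by auto
  qed
  ultimately show ?thesis using that by blast
qed

text \<open>Otherwise the witnesses \<open>z\<^sub>i \<in> Q\<^sub>i\<^sub>+\<^sub>1 - Q\<^sub>i\<close>, polynomials in the variables outside \<open>Q\<^sub>0\<close>, would be
  too many to be algebraically independent modulo \<open>Q\<^sub>0\<close>.\<close>
lemma prime_chain_length_le:
  fixes Q :: "nat \<Rightarrow> ('v::finite,'k::field) mpoly set"
  assumes prime: "\<And>i. i \<le> n \<Longrightarrow> poly_prime (Q i)" and chain: "\<And>i. i < n \<Longrightarrow> Q i \<subset> Q (Suc i)"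
  shows "n \<le> card {v. pvar v \<notin> Q 0}"
proof (rule ccontr)
  define W where "W = {v. pvar v \<notin> Q 0}"
  assume "\<not> n \<le> card {v. pvar v \<notin> Q 0}"
  hence n: "Suc (card W) \<le> n" unfolding W_def by simp
  obtain z where z: "\<And>i. i < n \<Longrightarrow> z i \<in> Q (Suc i) \<and> z i \<notin> Q i"
    and vars: "\<And>i m. m \<in> Poly_Mapping.keys (z i) \<Longrightarrow> Poly_Mapping.keys m \<subseteq> W"
    using prime_chain_witnesses_in_nonvars[of n Q, OF prime chain] unfolding W_def by blast
  obtain J c \<alpha> where J: "finite J" "inj_on (\<lambda>\<alpha>. restrict \<alpha> {0..<Suc (card W)}) J" "\<alpha> \<in> J" "c \<alpha> \<noteq> 0"
    and rel: "(\<Sum>\<alpha>\<in>J. mpoly_const (c \<alpha>) * (\<Prod>i=0..<Suc (card W). z i ^ \<alpha> i)) = 0"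
    by (rule exists_algebraic_relation[of W z]) (simp_all add: vars)
  show False
  proof (rule prime_chain_no_relation[of 0 "Suc (card W)" Q z J \<alpha> c])
    show "\<And>i. 0 \<le> i \<Longrightarrow> i \<le> Suc (card W) \<Longrightarrow> poly_prime (Q i)" using prime n by simp
    show "\<And>i. 0 \<le> i \<Longrightarrow> i < Suc (card W) \<Longrightarrow> Q i \<subseteq> Q (Suc i) \<and> z i \<in> Q (Suc i) \<and> z i \<notin> Q i"
      using chain z n by (metis order_less_le_trans psubset_imp_subset)
    show "(\<Sum>\<alpha>\<in>J. mpoly_const (c \<alpha>) * (\<Prod>i=0..<Suc (card W). z i ^ \<alpha> i)) \<in> Q 0"
      using rel prime[of 0] unfolding poly_prime_def poly_ideal_def by simp
    show "0 \<le> Suc (card W)" by simp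
  qed (fact J)+
qed

section \<open>Krull dimension of quotient rings\<close>

lemma (in cring) quotient_carrier_elem:
  assumes "ideal I R" "x \<in> carrier (R Quot I)"
  obtains r where "r \<in> carrier R" "x = I +> r"
  using assms(2) unfolding FactRing_def A_RCOSETS_def'[of R I] by auto

lemma (in cring) primeideal_quotient_vimage:
  assumes I: "ideal I R" and P: "primeideal P (R Quot I)"
  shows "primeideal {r \<in> carrier R. I +> r \<in> P} R"
  using ring_hom_ring.primeideal_vimage[OF ideal.rcos_ring_hom_ring[OF I] is_cring P] .

lemma (in cring) primeideal_quotient_image:
  assumes I: "ideal I R" and Q: "primeideal Q R" and IQ: "I \<subseteq> Q"
  shows "primeideal ((+>) I ` Q) (R Quot I)"
proof (rule primeidealI)
  have Qi: "ideal Q R" using Q primeideal.axioms(1) by blast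
  show "ideal ((+>) I ` Q) (R Quot I)" using ring_ideal_imp_quot_ideal[OF I Qi] .
  show "cring (R Quot I)" using ideal.quotient_is_cring[OF I is_cring] .
  have sub: "(+>) I ` Q \<subseteq> carrier (R Quot I)"
    using ideal.axioms(1)[OF \<open>ideal ((+>) I ` Q) (R Quot I)\<close>] additive_subgroup.a_subset by blast
  have U: "\<Union> ((+>) I ` Q) = Q" using ideal_incl_iff[OF I Qi] IQ by blast
  show "carrier (R Quot I) \<noteq> (+>) I ` Q"
  proof
    assume h: "carrier (R Quot I) = (+>) I ` Q"
    have "I +> \<one> \<in> carrier (R Quot I)"
      unfolding FactRing_def A_RCOSETS_def'[of R I] by auto
    hence "\<one> \<in> \<Union> ((+>) I ` Q)"
      using canonical_proj_vimage_mem_iff[OF I sub, of \<one>] h by simp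
    hence "\<one> \<in> Q" using U by simp
    thus False using Q primeideal.I_notcarr ideal.one_imp_carrier[OF Qi] by metis
  qed
  fix a b assume a: "a \<in> carrier (R Quot I)" and b: "b \<in> carrier (R Quot I)"
    and ab: "a \<otimes>\<^bsub>R Quot I\<^esub> b \<in> (+>) I ` Q"
  obtain x where x: "x \<in> carrier R" "a = I +> x" using quotient_carrier_elem[OF I a] .
  obtain y where y: "y \<in> carrier R" "b = I +> y" using quotient_carrier_elem[OF I b] .
  have "a \<otimes>\<^bsub>R Quot I\<^esub> b = I +> (x \<otimes> y)"
    unfolding FactRing_def using x y ideal.rcoset_mult_add[OF I] by simp
  hence "x \<otimes> y \<in> Q" using canonical_proj_vimage_mem_iff[OF I sub, of "x \<otimes> y"] ab U x y by simp
  hence "x \<in> Q \<or> y \<in> Q" using primeideal.I_prime[OF Q] x y by blast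
  thus "a \<in> (+>) I ` Q \<or> b \<in> (+>) I ` Q" using x y by blast
qed

lemma (in cring) krull_dim_quotient_ge:
  assumes I: "ideal I R"
    and Q: "\<And>i. i \<le> n \<Longrightarrow> primeideal (Q i) R"
    and ch: "\<And>i. i < n \<Longrightarrow> Q i \<subset> Q (Suc i)"
    and IQ: "I \<subseteq> Q 0"
  shows "enat n \<le> krull_dim (R Quot I)"
proof -
  have mono: "Q 0 \<subseteq> Q i" if "i \<le> n" for i
    using that proof (induction i)
    case (Suc i) thus ?case using ch[of i] by auto
  qed simp
  define P where "P i = (+>) I ` Q i" for i
  have U: "\<Union> (P i) = Q i" if "i \<le> n" for i
    unfolding P_def using ideal_incl_iff[OF I primeideal.axioms(1)[OF Q[OF that]]] IQ mono[OF that] by blast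
  have "(\<forall>i\<le>n. primeideal (P i) (R Quot I)) \<and> (\<forall>i<n. P i \<subset> P (Suc i))"
  proof (intro conjI allI impI)
    fix i assume "i \<le> n" thus "primeideal (P i) (R Quot I)"
      unfolding P_def using primeideal_quotient_image[OF I Q] IQ mono by blast
  next
    fix i assume i: "i < n"
    have "P i \<subseteq> P (Suc i)" unfolding P_def using ch[OF i] by auto
    moreover have "P i \<noteq> P (Suc i)" using U[of i] U[of "Suc i"] i ch[OF i] by auto
    ultimately show "P i \<subset> P (Suc i)" by blast
  qed
  thus ?thesis unfolding krull_dim_def by (intro Sup_upper) blast
qed

lemma (in cring) krull_dim_quotient_le:
  assumes I: "ideal I R"
    and H: "\<And>n Q. (\<And>i. i \<le> n \<Longrightarrow> primeideal (Q i) R) \<Longrightarrow> (\<And>i. i < n \<Longrightarrow> Q i \<subset> Q (Suc i))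
               \<Longrightarrow> I \<subseteq> Q 0 \<Longrightarrow> n \<le> N"
  shows "krull_dim (R Quot I) \<le> enat N"
  unfolding krull_dim_def
proof (rule Sup_least, clarify)
  fix n P assume P: "\<forall>i\<le>n. primeideal (P i :: 'a set set) (R Quot I)" and ch: "\<forall>i<n. P i \<subset> P (Suc i)"
  define Q where "Q i = {r \<in> carrier R. I +> r \<in> P i}" for i
  have Qp: "primeideal (Q i) R" if "i \<le> n" for i
    unfolding Q_def using primeideal_quotient_vimage[OF I] P that by blast
  have "I \<subseteq> Q 0"
  proof
    fix r assume r: "r \<in> I"
    have "I +> r = I" using r ideal.axioms(1)[OF I]
      by (meson abelian_subgroup.a_rcos_const additive_subgroup.a_subgroup I ideal_is_normal is_abelian_group abelian_subgroupI3)
    moreover have "I \<in> P 0"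
      using P additive_subgroup.zero_closed[OF ideal.axioms(1)[OF primeideal.axioms(1)]]
      unfolding FactRing_def by (metis le0 ring.simps(1))
    ultimately show "r \<in> Q 0" unfolding Q_def using r ideal.Icarr[OF I] by simp
  qed
  moreover have "Q i \<subset> Q (Suc i)" if i: "i < n" for i
  proof -
    have "Q i \<subseteq> Q (Suc i)" unfolding Q_def using ch i by auto
    moreover obtain x where x: "x \<in> P (Suc i)" "x \<notin> P i" using ch i by blast
    moreover have "x \<in> carrier (R Quot I)"
      using x P i additive_subgroup.a_subset[OF ideal.axioms(1)[OF primeideal.axioms(1)]]
      by (metis Suc_leI subsetD)
    then obtain r where "r \<in> carrier R" "x = I +> r" using quotient_carrier_elem[OF I] by blast
    ultimately show ?thesis unfolding Q_def by auto
  qed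
  ultimately show "enat n \<le> enat N" using H[of n Q] Qp by simp
qed

section \<open>Edge ideals\<close>

definition independent_set :: "('v \<Rightarrow> 'v \<Rightarrow> bool) \<Rightarrow> 'v set \<Rightarrow> bool" where
  "independent_set G S \<longleftrightarrow> (\<forall>u\<in>S. \<forall>v\<in>S. \<not> G u v)"

lemma edge_ideal_ideal: "ideal (edge_ideal G :: ('v,'k::field) mpoly set) poly_ring"
proof -
  interpret cring "poly_ring :: ('v,'k) mpoly ring" by (rule poly_ring_cring)
  show ?thesis unfolding edge_ideal_def by (rule genideal_ideal) simp
qed

lemma edge_ideal_subset_poly_prime:
  assumes "poly_prime Q" "\<And>u v. G u v \<Longrightarrow> pvar u \<in> Q \<or> pvar v \<in> Q"
  shows "edge_ideal G \<subseteq> (Q :: ('v,'k::field) mpoly set)"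
proof -
  interpret cring "poly_ring :: ('v,'k) mpoly ring" by (rule poly_ring_cring)
  have "ideal Q poly_ring" using poly_prime_imp_primeideal[OF assms(1)] primeideal.axioms(1) by blast
  moreover have "pvar u * pvar v \<in> Q" if "G u v" for u v
    using assms(2)[OF that] assms(1) poly_ideal_mult_right unfolding poly_prime_def poly_ideal_def
    by (metis mult.commute)
  hence "{pvar u * pvar v | u v. G u v} \<subseteq> Q" by blast
  ultimately show ?thesis unfolding edge_ideal_def by (rule genideal_minimal)
qed

lemma independent_nonvars:
  assumes "poly_prime Q" "edge_ideal G \<subseteq> (Q :: ('v,'k::field) mpoly set)"
  shows "independent_set G {v. pvar v \<notin> Q}"
proof -
  interpret cring "poly_ring :: ('v,'k) mpoly ring" by (rule poly_ring_cring)
  have "{pvar u * pvar v | u v. G u v} \<subseteq> (edge_ideal G :: ('v,'k) mpoly set)"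
    unfolding edge_ideal_def by (rule genideal_self) simp
  hence "pvar u * pvar v \<in> Q" if "G u v" for u v using assms(2) that by blast
  thus ?thesis using assms(1) unfolding independent_set_def poly_prime_def by blast
qed

lemma krull_dim_edge_ideal_quotient_le:
  fixes G :: "'v::finite \<Rightarrow> 'v \<Rightarrow> bool"
  assumes "\<And>A. independent_set G A \<Longrightarrow> card A \<le> N"
  shows "krull_dim (poly_ring Quot (edge_ideal G :: ('v,'k::field) mpoly set)) \<le> enat N"
proof -
  interpret cring "poly_ring :: ('v,'k) mpoly ring" by (rule poly_ring_cring)
  show ?thesis
  proof (rule krull_dim_quotient_le[OF edge_ideal_ideal])
    fix n and Q :: "nat \<Rightarrow> ('v,'k) mpoly set"
    assume prime: "\<And>i. i \<le> n \<Longrightarrow> primeideal (Q i) poly_ring"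
      and chain: "\<And>i. i < n \<Longrightarrow> Q i \<subset> Q (Suc i)" and sub: "edge_ideal G \<subseteq> Q 0"
    have P: "poly_prime (Q i)" if "i \<le> n" for i by (rule primeideal_imp_poly_prime[OF prime[OF that]])
    have "n \<le> card {v. pvar v \<notin> Q 0}" by (rule prime_chain_length_le[of n Q, OF P chain])
    also have "\<dots> \<le> N" by (rule assms[OF independent_nonvars[OF P sub]]) simp
    finally show "n \<le> N" .
  qed
qed

lemma krull_dim_edge_ideal_quotient_ge:
  fixes G :: "'v::finite \<Rightarrow> 'v \<Rightarrow> bool"
  assumes "independent_set G A"
  shows "enat (card A) \<le> krull_dim (poly_ring Quot (edge_ideal G :: ('v,'k::field) mpoly set))"
proof -
  interpret cring "poly_ring :: ('v,'k) mpoly ring" by (rule poly_ring_cring)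
  obtain e where e: "bij_betw e {0..<card A} A"
    using ex_bij_betw_nat_finite[OF finite[of A]] by blast
  define Q :: "nat \<Rightarrow> ('v,'k) mpoly set" where "Q j = var_ideal (- e ` {j..<card A})" for j
  show ?thesis
  proof (rule krull_dim_quotient_ge[OF edge_ideal_ideal, of "card A" Q])
    show "primeideal (Q i) poly_ring" for i
      unfolding Q_def by (rule poly_prime_imp_primeideal[OF poly_prime_var_ideal])
    show "Q i \<subset> Q (Suc i)" if i: "i < card A" for i
    proof
      show "Q i \<subseteq> Q (Suc i)" unfolding Q_def by (rule var_ideal_mono) auto
      have "e i \<notin> e ` {Suc i..<card A}"
      proof
        assume "e i \<in> e ` {Suc i..<card A}"
        then obtain x where x: "x \<in> {Suc i..<card A}" "e i = e x" by blast
        hence "i = x" using i inj_onD[OF bij_betw_imp_inj_on[OF e]] by simp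
        thus False using x by simp
      qed
      hence "pvar (e i) \<in> Q (Suc i)" "pvar (e i) \<notin> Q i"
        unfolding Q_def pvar_in_var_ideal_iff using i by auto
      thus "Q i \<noteq> Q (Suc i)" by blast
    qed
    show "edge_ideal G \<subseteq> Q 0"
    proof (rule edge_ideal_subset_poly_prime)
      show "poly_prime (Q 0)" unfolding Q_def by (rule poly_prime_var_ideal)
      fix u v assume "G u v"
      hence "u \<notin> A \<or> v \<notin> A" using assms unfolding independent_set_def by blast
      moreover have "e ` {0..<card A} = A" using e by (simp add: bij_betw_def)
      ultimately show "pvar u \<in> Q 0 \<or> pvar v \<in> Q 0" unfolding Q_def pvar_in_var_ideal_iff by auto
    qed
  qed
qed

lemma krull_dim_edge_ideal_quotient_eq:
  fixes G :: "'v::finite \<Rightarrow> 'v \<Rightarrow> bool"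
  assumes "independent_set G A" "card A = N" "\<And>A. independent_set G A \<Longrightarrow> card A \<le> N"
  shows "krull_dim (poly_ring Quot (edge_ideal G :: ('v,'k::field) mpoly set)) = enat N"
proof (rule antisym)
  show "krull_dim (poly_ring Quot (edge_ideal G :: ('v,'k) mpoly set)) \<le> enat N"
    by (rule krull_dim_edge_ideal_quotient_le) (rule assms(3))
  show "enat N \<le> krull_dim (poly_ring Quot (edge_ideal G :: ('v,'k) mpoly set))"
    using krull_dim_edge_ideal_quotient_ge[OF assms(1)] assms(2) by simp
qed

section \<open>Independent sets in the square of the double broom\<close>

fun broom_pos :: "nat \<Rightarrow> bvert \<Rightarrow> nat" where
  "broom_pos k (Lf1 _) = 0" | "broom_pos k (Pth i) = Suc i" | "broom_pos k (Lf2 _) = Suc k"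

lemma graph_square_intros:
  "x \<noteq> y \<Longrightarrow> E x y \<Longrightarrow> graph_square E x y"
  "x \<noteq> y \<Longrightarrow> E x w \<Longrightarrow> E w y \<Longrightarrow> graph_square E x y"
  unfolding graph_square_def by blast+

lemma graph_square_sym: "(\<And>x y. E x y \<Longrightarrow> E y x) \<Longrightarrow> graph_square E x y \<Longrightarrow> graph_square E y x"
  unfolding graph_square_def by blast

context
  fixes n1 k n2 :: nat
begin

lemma double_broom_E_in_V:
  assumes "k \<ge> 1" "double_broom_E n1 k n2 x y"
  shows "x \<in> double_broom_V n1 k n2" "y \<in> double_broom_V n1 k n2"
  using assms unfolding double_broom_E_def double_broom_E0_def double_broom_V_def by auto

lemma double_broom_E_sym: "double_broom_E n1 k n2 x y \<Longrightarrow> double_broom_E n1 k n2 y x"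
  unfolding double_broom_E_def by blast

lemma double_broom_edges:
  "a < n1 - 1 \<Longrightarrow> double_broom_E n1 k n2 (Lf1 a) (Pth 0)"
  "Suc i < k \<Longrightarrow> double_broom_E n1 k n2 (Pth i) (Pth (Suc i))"
  "b < n2 - 1 \<Longrightarrow> double_broom_E n1 k n2 (Pth (k - 1)) (Lf2 b)"
  unfolding double_broom_E_def double_broom_E0_def by auto

lemma broom_pos_le_if_double_broom_E:
  assumes "k \<ge> 1" "double_broom_E n1 k n2 x y"
  shows "broom_pos k y \<le> broom_pos k x + 1"
  using assms unfolding double_broom_E_def double_broom_E0_def by auto

lemma broom_pos_le_if_graph_square:
  assumes "k \<ge> 1" "graph_square (double_broom_E n1 k n2) x y"
  shows "broom_pos k y \<le> broom_pos k x + 2"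
proof -
  note step = broom_pos_le_if_double_broom_E[OF assms(1)]
  consider "double_broom_E n1 k n2 x y" | w where "double_broom_E n1 k n2 x w" "double_broom_E n1 k n2 w y"
    using assms(2) unfolding graph_square_def by blast
  thus ?thesis
  proof cases
    case 1 thus ?thesis using step by fastforce
  next
    case 2 thus ?thesis using step[of x w] step[of w y] by linarith
  qed
qed

lemma graph_square_double_broom_if_close:
  assumes k: "k \<ge> 4" and x: "x \<in> double_broom_V n1 k n2" and y: "y \<in> double_broom_V n1 k n2"
    and ne: "x \<noteq> y" and le: "broom_pos k x \<le> broom_pos k y" and close: "broom_pos k y \<le> broom_pos k x + 2"
  shows "graph_square (double_broom_E n1 k n2) x y"
proof -
  note E = double_broom_edges and sq = graph_square_intros[OF ne]
  have path_end: "k - 1 = Suc (k - 2)" "Suc (k - 2) < k" using k by simp_all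
  show ?thesis
  proof (cases x)
    case (Lf1 a)
    have a: "a < n1 - 1" using x Lf1 unfolding double_broom_V_def by auto
    show ?thesis
    proof (cases y)
      case (Lf1 b)
      hence "b < n1 - 1" using y unfolding double_broom_V_def by auto
      thus ?thesis using sq(2) E(1)[OF a] double_broom_E_sym[OF E(1)] \<open>x = _\<close> Lf1 by blast
    next
      case (Pth j)
      hence "j = 0 \<or> j = 1" using close \<open>x = _\<close> by auto
      thus ?thesis using sq E(1)[OF a] E(2)[of 0] k \<open>x = _\<close> Pth by auto
    qed (use close \<open>x = _\<close> k in simp)
  next
    case (Pth i)
    have i: "i < k" using x Pth unfolding double_broom_V_def by auto
    show ?thesis
    proof (cases y)
      case (Pth j)
      have "j < k" "j = Suc i \<or> j = Suc (Suc i)" using y le close ne \<open>x = _\<close> Pth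
        unfolding double_broom_V_def by auto
      thus ?thesis using sq E(2)[of i] E(2)[of "Suc i"] \<open>x = _\<close> Pth by auto
    next
      case (Lf2 b)
      have "b < n2 - 1" "i = k - 1 \<or> i = k - 2" using y close i \<open>x = _\<close> Lf2
        unfolding double_broom_V_def by auto
      thus ?thesis using sq E(2)[of "k - 2"] E(3) path_end \<open>x = _\<close> Lf2 by auto
    qed (use le ne \<open>x = _\<close> in simp)
  next
    case (Lf2 a)
    have a: "a < n2 - 1" using x Lf2 unfolding double_broom_V_def by auto
    show ?thesis
    proof (cases y)
      case (Lf2 b)
      hence "b < n2 - 1" using y unfolding double_broom_V_def by auto
      thus ?thesis using sq(2) double_broom_E_sym[OF E(3)[OF a]] E(3) \<open>x = _\<close> Lf2 by blast
    qed (use le y \<open>x = _\<close> in \<open>auto simp: double_broom_V_def\<close>)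
  qed
qed

text \<open>Two vertices in the same block \<open>{3j, 3j+1, 3j+2}\<close> of positions are adjacent in the square.\<close>
lemma card_independent_double_broom_square_le:
  assumes k: "k \<ge> 4" and S: "S \<subseteq> double_broom_V n1 k n2"
    and ind: "independent_set (graph_square (double_broom_E n1 k n2)) S"
  shows "card S \<le> (k - 2) div 3 + 2"
proof -
  define g where "g x = broom_pos k x div 3" for x
  have "inj_on g S"
  proof (rule inj_onI, rule ccontr)
    fix x y assume xy: "x \<in> S" "y \<in> S" "g x = g y" "x \<noteq> y"
    hence close: "broom_pos k y \<le> broom_pos k x + 2" "broom_pos k x \<le> broom_pos k y + 2"
      unfolding g_def by linarith+
    have "x \<in> double_broom_V n1 k n2" "y \<in> double_broom_V n1 k n2" using S xy by auto
    hence "graph_square (double_broom_E n1 k n2) x y \<or> graph_square (double_broom_E n1 k n2) y x"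
      using graph_square_double_broom_if_close[OF k] xy(4) close
      by (cases "broom_pos k x \<le> broom_pos k y") (auto simp: eq_commute[of x])
    thus False using ind xy unfolding independent_set_def by blast
  qed
  moreover have "g ` S \<subseteq> {..(k + 1) div 3}"
    using S unfolding g_def double_broom_V_def by (auto intro: div_le_mono)
  ultimately have "card S \<le> Suc ((k + 1) div 3)"
    by (metis card_atMost card_image card_mono finite_atMost)
  thus ?thesis using k by simp
qed

text \<open>Both families of leaves contribute a vertex, and the path vertices \<open>Pth 2, Pth 5, \<dots>\<close> the rest;
  their positions are pairwise at least \<open>3\<close> apart.\<close>
lemma independent_double_broom_square_exists:
  assumes k: "k \<ge> 4" and n: "n1 \<ge> 2" "n2 \<ge> 2"
  obtains S where "S \<subseteq> double_broom_V n1 k n2" "card S = (k - 2) div 3 + 2"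
    "independent_set (graph_square (double_broom_E n1 k n2)) S"
proof -
  define q where "q = (k - 2) div 3"
  define P where "P = (\<lambda>j. Pth (3 * j + 2)) ` {..<q}"
  define S where "S = insert (Lf1 0) (insert (Lf2 0) P)"
  have q: "3 * q \<le> k - 2" unfolding q_def by simp
  have "card P = q" unfolding P_def by (subst card_image) (auto simp: inj_on_def)
  hence "card S = q + 2" unfolding S_def P_def by (auto simp: card_insert_if)
  moreover have "S \<subseteq> double_broom_V n1 k n2"
    unfolding S_def P_def double_broom_V_def using n q by auto
  moreover have far: "broom_pos k x + 3 \<le> broom_pos k y \<or> broom_pos k y + 3 \<le> broom_pos k x"
    if "x \<in> S" "y \<in> S" "x \<noteq> y" for x y
    using that q k unfolding S_def P_def by auto
  have "independent_set (graph_square (double_broom_E n1 k n2)) S"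
    unfolding independent_set_def
  proof (intro ballI notI)
    fix x y assume xy: "x \<in> S" "y \<in> S" and sq: "graph_square (double_broom_E n1 k n2) x y"
    have "x \<noteq> y" using sq unfolding graph_square_def by blast
    moreover have "graph_square (double_broom_E n1 k n2) y x"
      using graph_square_sym[of "double_broom_E n1 k n2" x y] double_broom_E_sym sq by blast
    ultimately show False
      using far[OF xy] broom_pos_le_if_graph_square[of x y] broom_pos_le_if_graph_square[of y x] sq k
      by linarith
  qed
  ultimately show ?thesis using that unfolding q_def by blast
qed

end

lemma nat_ceiling_div_3: "nat \<lceil>(real k - 4) / 3\<rceil> = (k - 2) div 3"
proof (cases "k \<ge> 2")
  case True
  define t r where "t = (k - 2) div 3" and "r = (k - 2) mod 3"
  have "k = 3 * t + r + 2" "r < 3" unfolding t_def r_def using True by simp_all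
  hence "\<lceil>(real k - 4) / 3\<rceil> = int t" unfolding ceiling_eq_iff by (simp add: field_simps)
  thus ?thesis unfolding t_def by simp
next
  case False
  hence "k = 0 \<or> k = 1" by auto
  thus ?thesis by auto
qed

lemma graph_square_bij_betw:
  assumes f: "bij_betw f UNIV V" and E: "\<And>u v. E u v \<longleftrightarrow> E' (f u) (f v)"
    and E': "\<And>x y. E' x y \<Longrightarrow> y \<in> V"
  shows "graph_square E u v \<longleftrightarrow> graph_square E' (f u) (f v)"
proof -
  have "(\<exists>w. E u w \<and> E w v) \<longleftrightarrow> (\<exists>b. E' (f u) b \<and> E' b (f v))"
    using E E' f unfolding bij_betw_def by blast
  moreover have "u \<noteq> v \<longleftrightarrow> f u \<noteq> f v" using f unfolding bij_betw_def by (meson injD)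
  ultimately show ?thesis unfolding graph_square_def using E by blast
qed

lemma independent_set_bij_betw:
  assumes f: "bij_betw f UNIV V" and GH: "\<And>u v. G u v \<longleftrightarrow> H (f u) (f v)"
    and S: "S \<subseteq> V" "independent_set H S" "card S = N"
    and max: "\<And>S. S \<subseteq> V \<Longrightarrow> independent_set H S \<Longrightarrow> card S \<le> N"
  shows "independent_set G (f -` S)" "card (f -` S) = N" "\<And>A. independent_set G A \<Longrightarrow> card A \<le> N"
proof -
  have inj: "inj f" and V: "range f = V" using f by (simp_all add: bij_betw_def)
  have image: "independent_set H (f ` A) \<longleftrightarrow> independent_set G A" "card (f ` A) = card A" for A
    using GH card_image[OF inj_on_subset[OF inj]] unfolding independent_set_def by auto
  have "f ` (f -` S) = S" using S(1) V by (simp add: image_vimage_eq Int_absorb2)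
  thus "independent_set G (f -` S)" "card (f -` S) = N" using S(2,3) image[of "f -` S"] by simp_all
  show "card A \<le> N" if "independent_set G A" for A
  proof -
    have "f ` A \<subseteq> V" using V by blast
    hence "card (f ` A) \<le> N" using max[of "f ` A"] that image(1) by blast
    thus ?thesis using image(2) by simp
  qed
qed

theorem proposition4p15:
  fixes E :: "'v::finite \<Rightarrow> 'v \<Rightarrow> bool"
    and f :: "'v \<Rightarrow> bvert"
    and n1 k n2 :: nat
  assumes "n1 \<ge> 2" and "n2 \<ge> 2" and "k \<ge> 4"
    and "bij_betw f UNIV (double_broom_V n1 k n2)"
    and "\<And>u v. E u v \<longleftrightarrow> double_broom_E n1 k n2 (f u) (f v)"
  shows "krull_dim (poly_ring Quot (edge_ideal (graph_square E) :: (('v \<Rightarrow>\<^sub>0 nat) \<Rightarrow>\<^sub>0 'k::field) set))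
           = enat (nat \<lceil>(real k - 4) / 3\<rceil> + 2)"
proof -
  let ?H = "graph_square (double_broom_E n1 k n2)"
  obtain S where S: "S \<subseteq> double_broom_V n1 k n2" "independent_set ?H S" "card S = (k - 2) div 3 + 2"
    using independent_double_broom_square_exists[OF assms(3,1,2)] by metis
  have "graph_square E u v \<longleftrightarrow> ?H (f u) (f v)" for u v
    using graph_square_bij_betw[of f "double_broom_V n1 k n2" E, OF assms(4,5)] double_broom_E_in_V(2) assms(3)
    by simp
  note transfer = independent_set_bij_betw[OF assms(4) this S card_independent_double_broom_square_le[OF assms(3)]]
  have "krull_dim (poly_ring Quot (edge_ideal (graph_square E) :: ('v,'k) mpoly set)) = enat ((k - 2) div 3 + 2)"
    by (rule krull_dim_edge_ideal_quotient_eq[OF transfer])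
  thus ?thesis unfolding nat_ceiling_div_3 .
qed

end
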